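(* Let $(X,d)$ be a geodesic metric space, and assume that for every $\lambda>0$ the kernel $k_\lambda(x,y)=\exp(-\lambda\, d^2(x,y))$ is a positive definite kernel on $X$. Then $(X,d)$ is flat in the sense of Alexandrov.
   Context: A path $\gamma\colon[0,L]\to X$ is a geodesic from $x$ to $y$ if $\gamma(0)=x$, $\gamma(L)=y$ and $d(\gamma(t),\gamma(t'))=|t-t'|$ for all $t,t'\in[0,L]$. A metric space is a geodesic metric space if every pair of points is joined by a geodesic. A geodesic triangle consists of three points $a,b,c$ together with geodesics $\gamma_{ab},\gamma_{bc},\gamma_{ac}$ joining them. A geodesic metric space $(X,d)$ is flat in the sense of Alexandrov if every geodesic triangle in $X$ (viewed as a metric subspace with the restricted metric $d$) can be isometrically embedded (i.e. with distances preserved) into a Euclidean space. A positive definite (PD) kernel on a topological space $X$ is a continuous function $k\colon X\times X\to\mathbb{R}$ such that for all $n\in\mathbb{N}$, all $x_1,\dots,x_n\in X$ and all $c_1,\dots,c_n\in\mathbb{R}$, $\sum_{i,j}c_ic_jk(x_i,x_j)\ge 0$; $X$ carries the metric topology. *)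

theory Defs
  imports "HOL-Analysis.Analysis"
begin

definition geodesic_in :: "'a::metric_space set \<Rightarrow> (real \<Rightarrow> 'a) \<Rightarrow> real \<Rightarrow> 'a \<Rightarrow> 'a \<Rightarrow> bool" where
  "geodesic_in X \<gamma> L x y \<longleftrightarrow> 0 \<le> L \<and> \<gamma> ` {0..L} \<subseteq> X \<and> \<gamma> 0 = x \<and> \<gamma> L = y \<and>
     (\<forall>t\<in>{0..L}. \<forall>t'\<in>{0..L}. dist (\<gamma> t) (\<gamma> t') = \<bar>t - t'\<bar>)"

definition geodesic_metric_space :: "'a::metric_space set \<Rightarrow> bool" where
  "geodesic_metric_space X \<longleftrightarrow> (\<forall>x\<in>X. \<forall>y\<in>X. \<exists>\<gamma> L. geodesic_in X \<gamma> L x y)"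

definition eucl_dist :: "nat \<Rightarrow> (nat \<Rightarrow> real) \<Rightarrow> (nat \<Rightarrow> real) \<Rightarrow> real" where
  "eucl_dist n u v = sqrt (\<Sum>i<n. (u i - v i)^2)"

definition embeds_in_euclidean :: "'a::metric_space set \<Rightarrow> bool" where
  "embeds_in_euclidean T \<longleftrightarrow>
     (\<exists>n::nat. \<exists>f::'a \<Rightarrow> (nat \<Rightarrow> real). \<forall>p\<in>T. \<forall>q\<in>T. eucl_dist n (f p) (f q) = dist p q)"

definition alexandrov_flat :: "'a::metric_space set \<Rightarrow> bool" where
  "alexandrov_flat X \<longleftrightarrow> geodesic_metric_space X \<and>
    (\<forall>a b c gab gbc gac Lab Lbc Lac.
       a \<in> X \<and> b \<in> X \<and> c \<in> X \<and>
       geodesic_in X gab Lab a b \<and> geodesic_in X gbc Lbc b c \<and> geodesic_in X gac Lac a c \<longrightarrow>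
       embeds_in_euclidean (gab ` {0..Lab} \<union> gbc ` {0..Lbc} \<union> gac ` {0..Lac}))"

definition pd_kernel :: "'a::metric_space set \<Rightarrow> ('a \<Rightarrow> 'a \<Rightarrow> real) \<Rightarrow> bool" where
  "pd_kernel X k \<longleftrightarrow> continuous_on (X \<times> X) (\<lambda>(x, y). k x y) \<and>
    (\<forall>(n::nat) (xs::nat \<Rightarrow> 'a) (c::nat \<Rightarrow> real). (\<forall>i<n. xs i \<in> X) \<longrightarrow>
       0 \<le> (\<Sum>i<n. \<Sum>j<n. c i * c j * k (xs i) (xs j)))"

end

theory Submission
  imports Defs
begin

text \<open>Positive definiteness of exp (-lam d^2) for every lam > 0 makes d^2 conditionally
  negative definite: in the expansion exp (-lam d^2) = 1 - lam d^2 + O(lam^2) the constant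
  term drops out against weights summing to zero. For a point p on a geodesic from x to y
  and any z, conditional negative definiteness of the four points p, x, y, z forces Stewart's
  identity d(p,z)^2 = (1-s) d(x,z)^2 + s d(y,z)^2 - s(1-s) d(x,y)^2, exactly as in the plane.
  Hence every point of a geodesic triangle abc carries barycentric coordinates with respect to
  a, b, c in terms of which all squared distances are given by the Euclidean formula, and
  sending each point to the same barycentric combination of a planar triangle with the same
  side lengths is an isometry.\<close>

lemma exp_minus_le_quadratic:
  fixes x :: real
  assumes "0 \<le> x"
  shows "exp (- x) \<le> 1 - x + x\<^sup>2 / 2"
proof -
  have pos: "0 < 1 + x + x\<^sup>2 / 2"
    using assms by (simp add: add_pos_nonneg)
  have "exp (- x) = 1 / exp x"
    by (simp add: exp_minus divide_inverse)
  also have "\<dots> \<le> 1 / (1 + x + x\<^sup>2 / 2)"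
    using exp_lower_Taylor_quadratic[OF assms] pos by (simp add: frac_le)
  also have "\<dots> \<le> 1 - x + x\<^sup>2 / 2"
  proof -
    have "(1 - x + x\<^sup>2 / 2) * (1 + x + x\<^sup>2 / 2) = 1 + x ^ 4 / 4"
      by (simp add: algebra_simps power2_eq_square power4_eq_xxxx)
    then show ?thesis
      using pos by (simp add: divide_le_eq)
  qed
  finally show ?thesis .
qed

lemma linear_coeff_eq_0_if_quadratic_nonpos:
  fixes a D :: real
  assumes "\<And>e. a * e - D * e\<^sup>2 \<le> 0"
  shows "a = 0"
proof (rule ccontr)
  assume "a \<noteq> 0"
  define d where "d = \<bar>D\<bar> + 1"
  have "d > 0" "D < d"
    by (simp_all add: d_def add_nonneg_pos)
  have "a * (a / d) - D * (a / d)\<^sup>2 = a\<^sup>2 * (d - D) / d\<^sup>2"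
    using \<open>d > 0\<close> by (simp add: power2_eq_square field_simps)
  also have "\<dots> > 0"
    using \<open>a \<noteq> 0\<close> \<open>d > 0\<close> \<open>D < d\<close> by (intro divide_pos_pos mult_pos_pos) auto
  finally show False
    using assms[of "a / d"] by simp
qed

lemma double_sum_mult_eq_0:
  fixes c :: "nat \<Rightarrow> real"
  assumes "(\<Sum>i<n. c i) = 0"
  shows "(\<Sum>i<n. \<Sum>j<n. c i * c j * r) = 0"
  using assms by (simp add: sum_distrib_left[symmetric] sum_distrib_right[symmetric])

lemma quadratic_form_exp_minus_le:
  fixes c :: "nat \<Rightarrow> real" and t :: "nat \<Rightarrow> nat \<Rightarrow> real"
  assumes c: "(\<Sum>i<n. c i) = 0" and t: "\<And>i j. 0 \<le> t i j" and lam: "0 \<le> lam"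
  shows "(\<Sum>i<n. \<Sum>j<n. c i * c j * exp (- (lam * t i j)))
    \<le> lam\<^sup>2 * (\<Sum>i<n. \<Sum>j<n. \<bar>c i * c j\<bar> * (t i j)\<^sup>2 / 2)
      - lam * (\<Sum>i<n. \<Sum>j<n. c i * c j * t i j)"
proof -
  have term_le: "c i * c j * exp (- (lam * t i j))
      \<le> c i * c j * 1 - lam * (c i * c j * t i j) + lam\<^sup>2 * (\<bar>c i * c j\<bar> * (t i j)\<^sup>2 / 2)"
    for i j
  proof -
    define x where "x = lam * t i j"
    have "0 \<le> x"
      using lam t by (simp add: x_def)
    then have "0 \<le> exp (- x) - (1 - x)" "exp (- x) - (1 - x) \<le> x\<^sup>2 / 2"
      using exp_ge_add_one_self[of "- x"] exp_minus_le_quadratic[of x] by auto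
    then have "c i * c j * (exp (- x) - (1 - x)) \<le> \<bar>c i * c j\<bar> * (x\<^sup>2 / 2)"
      by (metis abs_ge_self abs_ge_zero mult_mono)
    then show ?thesis
      by (simp add: x_def power_mult_distrib algebra_simps)
  qed
  have "(\<Sum>i<n. \<Sum>j<n. c i * c j * exp (- (lam * t i j)))
      \<le> (\<Sum>i<n. \<Sum>j<n. c i * c j * 1 - lam * (c i * c j * t i j)
            + lam\<^sup>2 * (\<bar>c i * c j\<bar> * (t i j)\<^sup>2 / 2))"
    by (intro sum_mono term_le)
  also have "\<dots> = lam\<^sup>2 * (\<Sum>i<n. \<Sum>j<n. \<bar>c i * c j\<bar> * (t i j)\<^sup>2 / 2)
      - lam * (\<Sum>i<n. \<Sum>j<n. c i * c j * t i j)"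
    using double_sum_mult_eq_0[OF c, of 1]
    by (simp add: sum.distrib sum_subtractf sum_distrib_left)
  finally show ?thesis .
qed

lemma nonpos_if_le_mult_all_pos:
  fixes Q M :: real
  assumes "\<And>lam. lam > 0 \<Longrightarrow> Q \<le> lam * M" and "0 \<le> M"
  shows "Q \<le> 0"
proof (rule ccontr)
  assume "\<not> Q \<le> 0"
  then have "Q / (M + 1) > 0" "Q / (M + 1) * M < Q"
    using \<open>0 \<le> M\<close> by (simp_all add: field_simps)
  then show False
    using assms(1) by fastforce
qed

definition cnd_kernel :: "'a set \<Rightarrow> ('a \<Rightarrow> 'a \<Rightarrow> real) \<Rightarrow> bool" where
  "cnd_kernel X k \<longleftrightarrow> (\<forall>(n::nat) (xs::nat \<Rightarrow> 'a) (c::nat \<Rightarrow> real).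
     (\<forall>i<n. xs i \<in> X) \<longrightarrow> (\<Sum>i<n. c i) = 0 \<longrightarrow> (\<Sum>i<n. \<Sum>j<n. c i * c j * k (xs i) (xs j)) \<le> 0)"

lemma cnd_kernel_if_pd_kernel_exp:
  fixes X :: "'a::metric_space set"
  assumes pd: "\<And>lam::real. lam > 0 \<Longrightarrow> pd_kernel X (\<lambda>x y. exp (- lam * k x y))"
    and k: "\<And>x y. 0 \<le> k x y"
  shows "cnd_kernel X k"
  unfolding cnd_kernel_def
proof (intro allI impI)
  fix n and xs :: "nat \<Rightarrow> 'a" and c :: "nat \<Rightarrow> real"
  assume xs: "\<forall>i<n. xs i \<in> X" and c: "(\<Sum>i<n. c i) = 0"
  define Q where "Q = (\<Sum>i<n. \<Sum>j<n. c i * c j * k (xs i) (xs j))"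
  define M where "M = (\<Sum>i<n. \<Sum>j<n. \<bar>c i * c j\<bar> * (k (xs i) (xs j))\<^sup>2 / 2)"
  have "Q \<le> lam * M" if "lam > 0" for lam
  proof -
    have "0 \<le> (\<Sum>i<n. \<Sum>j<n. c i * c j * exp (- (lam * k (xs i) (xs j))))"
      using pd[OF that] xs unfolding pd_kernel_def by simp
    also have "\<dots> \<le> lam\<^sup>2 * M - lam * Q"
      unfolding M_def Q_def using c k that by (intro quadratic_form_exp_minus_le) auto
    finally show ?thesis
      using that by (simp add: power2_eq_square)
  qed
  moreover have "0 \<le> M"
    unfolding M_def by (intro sum_nonneg) auto
  ultimately show "Q \<le> 0"
    by (intro nonpos_if_le_mult_all_pos)
qed

text \<open>The weights 1, -(1 - s) - e, -s, e on p, x, y, z turn the conditionally negative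
  definite form into 2 (a e - d(x,z)^2 e^2), where a is the defect of the identity;
  being nonpositive for all e, it forces a = 0.\<close>
lemma cnd_sq_dist_stewart:
  fixes X :: "'a::metric_space set"
  assumes cnd: "cnd_kernel X (\<lambda>x y. (dist x y)\<^sup>2)"
    and X: "p \<in> X" "x \<in> X" "y \<in> X" "z \<in> X"
    and xp: "dist x p = s * L" and py: "dist p y = (1 - s) * L" and xy: "dist x y = L"
  shows "(dist p z)\<^sup>2 = (1 - s) * (dist x z)\<^sup>2 + s * (dist y z)\<^sup>2 - s * (1 - s) * L\<^sup>2"
proof -
  define a where "a = (dist p z)\<^sup>2 - (1 - s) * (dist x z)\<^sup>2 - s * (dist y z)\<^sup>2 + s * (1 - s) * L\<^sup>2"
  have "a * e - (dist x z)\<^sup>2 * e\<^sup>2 \<le> 0" for e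
  proof -
    define xs where "xs i = [p, x, y, z] ! i" for i :: nat
    define c where "c i = [1, - (1 - s) - e, - s, e] ! i" for i :: nat
    have "(\<Sum>i<4. \<Sum>j<4. c i * c j * (dist (xs i) (xs j))\<^sup>2) \<le> 0"
    proof -
      have "\<forall>i<4. xs i \<in> X" "(\<Sum>i<4. c i) = 0"
        using X by (auto simp: xs_def c_def less_Suc_eq numeral_eq_Suc)
      then show ?thesis
        using cnd unfolding cnd_kernel_def by blast
    qed
    moreover have "(\<Sum>i<4. \<Sum>j<4. c i * c j * (dist (xs i) (xs j))\<^sup>2)
        = 2 * (a * e - (dist x z)\<^sup>2 * e\<^sup>2)"
      by (simp add: xs_def c_def numeral_eq_Suc xp py xy dist_commute[of _ x] dist_commute[of y p]
          dist_commute[of z] a_def algebra_simps power2_eq_square)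
    ultimately show ?thesis
      by simp
  qed
  then have "a = 0"
    by (rule linear_coeff_eq_0_if_quadratic_nonpos)
  then show ?thesis
    by (simp add: a_def)
qed

lemma geodesic_in_endpoints:
  assumes "geodesic_in X g L x y"
  shows "x \<in> X" "y \<in> X" "dist x y = L"
  using assms unfolding geodesic_in_def by auto

lemma geodesic_in_point:
  assumes g: "geodesic_in X g L x y" and s: "s \<in> {0..1}"
  shows "g (s * L) \<in> X" "dist x (g (s * L)) = s * L" "dist (g (s * L)) y = (1 - s) * L"
proof -
  have L: "0 \<le> L"
    using g by (simp add: geodesic_in_def)
  then have sL: "s * L \<in> {0..L}"
    using s mult_right_mono[of s 1 L] by auto
  have ends: "0 \<in> {0..L}" "L \<in> {0..L}"
    using L by auto
  show "g (s * L) \<in> X" "dist x (g (s * L)) = s * L"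
    using g sL ends s L unfolding geodesic_in_def by auto
  have "dist (g (s * L)) y = \<bar>s * L - L\<bar>"
    using g sL ends unfolding geodesic_in_def by metis
  also have "\<dots> = (1 - s) * L"
    using s L mult_right_mono[of s 1 L] by (simp add: abs_if algebra_simps)
  finally show "dist (g (s * L)) y = (1 - s) * L" .
qed

lemma geodesic_in_image:
  assumes "geodesic_in X g L x y" and "p \<in> g ` {0..L}"
  obtains s where "s \<in> {0..1}" "p = g (s * L)"
proof -
  from assms(2) obtain t where t: "t \<in> {0..L}" "p = g t"
    by blast
  show ?thesis
  proof (cases "L = 0")
    case True
    with t show ?thesis
      by (intro that[of 0]) auto
  next
    case False
    with t show ?thesis
      by (intro that[of "t / L"]) (auto simp: field_simps)
  qed
qed

lemma cnd_sq_dist_geodesic: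
  fixes X :: "'a::metric_space set"
  assumes cnd: "cnd_kernel X (\<lambda>x y. (dist x y)\<^sup>2)"
    and g: "geodesic_in X g L x y" and s: "s \<in> {0..1}" and z: "z \<in> X"
  shows "(dist (g (s * L)) z)\<^sup>2 = (1 - s) * (dist x z)\<^sup>2 + s * (dist y z)\<^sup>2 - s * (1 - s) * L\<^sup>2"
  using cnd_sq_dist_stewart[OF cnd geodesic_in_point(1)[OF g s] geodesic_in_endpoints(1,2)[OF g] z
      geodesic_in_point(2,3)[OF g s] geodesic_in_endpoints(3)[OF g]] .

text \<open>In a Euclidean space the defining identity holds exactly for the point
  p = ua a + ub b + uc c; here it only constrains squared distances from p to points of X.\<close>
definition barycentric_in ::
    "'a::metric_space set \<Rightarrow> 'a \<Rightarrow> 'a \<Rightarrow> 'a \<Rightarrow> real \<Rightarrow> real \<Rightarrow> real \<Rightarrow> 'a \<Rightarrow> bool" where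
  "barycentric_in X a b c ua ub uc p \<longleftrightarrow> ua + ub + uc = 1 \<and>
    (\<forall>z\<in>X. (dist p z)\<^sup>2 = ua * (dist a z)\<^sup>2 + ub * (dist b z)\<^sup>2 + uc * (dist c z)\<^sup>2
      - (ua * ub * (dist a b)\<^sup>2 + ua * uc * (dist a c)\<^sup>2 + ub * uc * (dist b c)\<^sup>2))"

lemma barycentric_in_sq_dist:
  assumes p: "barycentric_in X a b c ua ub uc p" and q: "barycentric_in X a b c va vb vc q"
    and X: "a \<in> X" "b \<in> X" "c \<in> X" "q \<in> X"
  shows "(dist p q)\<^sup>2 = - ((ua - va) * (ub - vb) * (dist a b)\<^sup>2
    + (ua - va) * (uc - vc) * (dist a c)\<^sup>2 + (ub - vb) * (uc - vc) * (dist b c)\<^sup>2)"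
proof -
  have u: "ua = 1 - ub - uc" and v: "va = 1 - vb - vc"
    using p q by (auto simp: barycentric_in_def)
  have pq: "(dist p q)\<^sup>2 = ua * (dist a q)\<^sup>2 + ub * (dist b q)\<^sup>2 + uc * (dist c q)\<^sup>2
      - (ua * ub * (dist a b)\<^sup>2 + ua * uc * (dist a c)\<^sup>2 + ub * uc * (dist b c)\<^sup>2)"
    using p X by (simp add: barycentric_in_def)
  have dq: "(dist a q)\<^sup>2 = vb * (dist a b)\<^sup>2 + vc * (dist a c)\<^sup>2
      - (va * vb * (dist a b)\<^sup>2 + va * vc * (dist a c)\<^sup>2 + vb * vc * (dist b c)\<^sup>2)"
       "(dist b q)\<^sup>2 = va * (dist a b)\<^sup>2 + vc * (dist b c)\<^sup>2
      - (va * vb * (dist a b)\<^sup>2 + va * vc * (dist a c)\<^sup>2 + vb * vc * (dist b c)\<^sup>2)"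
       "(dist c q)\<^sup>2 = va * (dist a c)\<^sup>2 + vb * (dist b c)\<^sup>2
      - (va * vb * (dist a b)\<^sup>2 + va * vc * (dist a c)\<^sup>2 + vb * vc * (dist b c)\<^sup>2)"
    using q X by (simp_all add: barycentric_in_def dist_commute[of _ q] dist_commute[of b a]
        dist_commute[of c a] dist_commute[of c b])
  show ?thesis
    unfolding pq dq u v by (simp add: algebra_simps)
qed

lemma cnd_barycentric_in_geodesic_triangle:
  fixes X :: "'a::metric_space set"
  assumes cnd: "cnd_kernel X (\<lambda>x y. (dist x y)\<^sup>2)"
    and ab: "geodesic_in X gab Lab a b" and bc: "geodesic_in X gbc Lbc b c"
    and ac: "geodesic_in X gac Lac a c"
    and p: "p \<in> gab ` {0..Lab} \<union> gbc ` {0..Lbc} \<union> gac ` {0..Lac}"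
  shows "p \<in> X" "\<exists>ua ub uc. barycentric_in X a b c ua ub uc p"
proof -
  note ends = geodesic_in_endpoints[OF ab] geodesic_in_endpoints[OF bc] geodesic_in_endpoints[OF ac]
  from p consider s where "s \<in> {0..1}" "p = gab (s * Lab)"
    | s where "s \<in> {0..1}" "p = gbc (s * Lbc)"
    | s where "s \<in> {0..1}" "p = gac (s * Lac)"
    using geodesic_in_image[OF ab] geodesic_in_image[OF bc] geodesic_in_image[OF ac] by blast
  then have "p \<in> X \<and> (\<exists>ua ub uc. barycentric_in X a b c ua ub uc p)"
  proof cases
    case (1 s)
    then have "barycentric_in X a b c (1 - s) s 0 p"
      using cnd_sq_dist_geodesic[OF cnd ab] ends by (simp add: barycentric_in_def)
    then show ?thesis
      using geodesic_in_point(1)[OF ab] 1 by blast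
  next
    case (2 s)
    then have "barycentric_in X a b c 0 (1 - s) s p"
      using cnd_sq_dist_geodesic[OF cnd bc] ends by (simp add: barycentric_in_def)
    then show ?thesis
      using geodesic_in_point(1)[OF bc] 2 by blast
  next
    case (3 s)
    then have "barycentric_in X a b c (1 - s) 0 s p"
      using cnd_sq_dist_geodesic[OF cnd ac] ends by (simp add: barycentric_in_def)
    then show ?thesis
      using geodesic_in_point(1)[OF ac] 3 by blast
  qed
  then show "p \<in> X" "\<exists>ua ub uc. barycentric_in X a b c ua ub uc p"
    by blast+
qed

lemma planar_triangle_exists:
  fixes l e g :: real
  assumes "0 \<le> l" "0 \<le> e" "0 \<le> g" "g \<le> l + e" "l \<le> e + g" "e \<le> l + g"
  obtains cx cy where "cx\<^sup>2 + cy\<^sup>2 = e\<^sup>2" "(cx - l)\<^sup>2 + cy\<^sup>2 = g\<^sup>2"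
proof (cases "l = 0")
  case True
  then have "g = e"
    using assms by simp
  with True show ?thesis
    by (intro that[of e 0]) simp_all
next
  case False
  then have l: "l > 0"
    using assms by simp
  define cx where "cx = (l\<^sup>2 + e\<^sup>2 - g\<^sup>2) / (2 * l)"
  have lcx: "2 * l * cx = l\<^sup>2 + e\<^sup>2 - g\<^sup>2"
    using l by (simp add: cx_def)
  have "\<bar>l - e\<bar> \<le> g"
    using assms by arith
  then have "0 \<le> (g\<^sup>2 - (l - e)\<^sup>2) * ((l + e)\<^sup>2 - g\<^sup>2)"
    using power_mono[of "\<bar>l - e\<bar>" g 2] power_mono[OF assms(4,3), of 2] by simp
  also have "\<dots> = (2 * l * e)\<^sup>2 - (2 * l * cx)\<^sup>2"
    unfolding lcx by (simp add: algebra_simps power2_eq_square)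
  finally have "(2 * l)\<^sup>2 * cx\<^sup>2 \<le> (2 * l)\<^sup>2 * e\<^sup>2"
    by (simp add: power_mult_distrib)
  then have cx: "cx\<^sup>2 \<le> e\<^sup>2"
    using l by simp
  define cy where "cy = sqrt (e\<^sup>2 - cx\<^sup>2)"
  have cy: "cy\<^sup>2 = e\<^sup>2 - cx\<^sup>2"
    using cx by (simp add: cy_def)
  have "(cx - l)\<^sup>2 + cy\<^sup>2 = e\<^sup>2 - 2 * l * cx + l\<^sup>2"
    using cy by (simp add: power2_eq_square algebra_simps)
  also note lcx
  finally show ?thesis
    using cy by (intro that[of cx cy]) simp_all
qed

text \<open>The left-hand side is the squared distance between the points ua A + ub B + uc C and
  va A + vb B + vc C of the planar triangle A = (0, 0), B = (l, 0), C = (cx, cy).\<close>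
lemma planar_barycentric_sq_dist:
  fixes l cx cy :: real
  assumes "ua + ub + uc = 1" "va + vb + vc = 1"
  shows "((ub - vb) * l + (uc - vc) * cx)\<^sup>2 + ((uc - vc) * cy)\<^sup>2
    = - ((ua - va) * (ub - vb) * l\<^sup>2 + (ua - va) * (uc - vc) * (cx\<^sup>2 + cy\<^sup>2)
      + (ub - vb) * (uc - vc) * ((cx - l)\<^sup>2 + cy\<^sup>2))"
proof -
  have u: "ua = 1 - ub - uc" and v: "va = 1 - vb - vc"
    using assms by simp_all
  show ?thesis
    unfolding u v by (simp add: algebra_simps power2_eq_square)
qed

lemma cnd_geodesic_triangle_embeds_in_euclidean:
  fixes X :: "'a::metric_space set"
  assumes cnd: "cnd_kernel X (\<lambda>x y. (dist x y)\<^sup>2)"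
    and ab: "geodesic_in X gab Lab a b" and bc: "geodesic_in X gbc Lbc b c"
    and ac: "geodesic_in X gac Lac a c"
  shows "embeds_in_euclidean (gab ` {0..Lab} \<union> gbc ` {0..Lbc} \<union> gac ` {0..Lac})"
    (is "embeds_in_euclidean ?T")
proof -
  note bary = cnd_barycentric_in_geodesic_triangle[OF cnd ab bc ac]
  obtain ua ub uc where u: "\<And>p. p \<in> ?T \<Longrightarrow> barycentric_in X a b c (ua p) (ub p) (uc p) p"
    using bary(2) by metis
  have X: "a \<in> X" "b \<in> X" "c \<in> X"
    using geodesic_in_endpoints[OF ab] geodesic_in_endpoints[OF bc] by auto
  obtain cx cy where C: "cx\<^sup>2 + cy\<^sup>2 = (dist a c)\<^sup>2" "(cx - dist a b)\<^sup>2 + cy\<^sup>2 = (dist b c)\<^sup>2"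
    by (rule planar_triangle_exists[of "dist a b" "dist a c" "dist b c"])
      (use dist_triangle[of a c b] dist_triangle[of b c a] dist_triangle[of a b c] in
        \<open>simp_all add: dist_commute\<close>)
  define f where "f p = (\<lambda>i::nat. if i = 0 then ub p * dist a b + uc p * cx
    else if i = 1 then uc p * cy else 0)" for p
  have "eucl_dist 2 (f p) (f q) = dist p q" if "p \<in> ?T" "q \<in> ?T" for p q
  proof -
    have "(\<Sum>i<2. (f p i - f q i)\<^sup>2)
        = ((ub p - ub q) * dist a b + (uc p - uc q) * cx)\<^sup>2 + ((uc p - uc q) * cy)\<^sup>2"
      by (simp add: f_def numeral_2_eq_2 algebra_simps)
    also have "\<dots> = (dist p q)\<^sup>2"
      unfolding barycentric_in_sq_dist[OF u[OF that(1)] u[OF that(2)] X bary(1)[OF that(2)]]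
        C[symmetric]
      using u[OF that(1)] u[OF that(2)] unfolding barycentric_in_def
      by (intro planar_barycentric_sq_dist) auto
    finally show ?thesis
      by (simp add: eucl_dist_def)
  qed
  then show ?thesis
    unfolding embeds_in_euclidean_def by blast
qed

theorem theorem1:
  fixes X :: "'a::metric_space set"
  assumes "geodesic_metric_space X"
    and "\<And>lam::real. lam > 0 \<Longrightarrow> pd_kernel X (\<lambda>x y. exp (- lam * (dist x y)^2))"
  shows "alexandrov_flat X"
proof -
  have "cnd_kernel X (\<lambda>x y. (dist x y)\<^sup>2)"
    by (rule cnd_kernel_if_pd_kernel_exp[OF assms(2)]) simp_all
  then show ?thesis
    unfolding alexandrov_flat_def
    using assms(1) cnd_geodesic_triangle_embeds_in_euclidean by blast
qed

end
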